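(* Consider the commutative algebra of Laurent polynomials in nonzero variables $a,b,c,d,e$ with coefficients polynomial in parameters $G_1,G_2$, equipped with the log-canonical Poisson bracket determined by $\{a,b\}=ab$, $\{a,c\}=0$, $\{a,d\}=-\tfrac12 ad$, $\{a,e\}=\tfrac12 ae$, $\{b,c\}=0$, $\{b,d\}=-\tfrac12 bd$, $\{b,e\}=\tfrac12 be$, $\{c,d\}=-\tfrac12 cd$, $\{c,e\}=\tfrac12 ce$, $\{d,e\}=0$, and $\{G_1,\cdot\}=\{G_2,\cdot\}=0$. Then $G_1$, $G_2$ and $de$ are Casimir elements and the generic symplectic leaves are $4$-dimensional. Moreover, the functions $$x_1=-e\frac{a}{c}-d\frac{b}{c},\qquad x_2=-e\frac{b}{c}-G_1 d\frac{b}{a}-d\frac{b^2}{ac}-d\frac{c}{a},\qquad x_3=-G_2\frac{c}{b}-G_1\frac{c}{a}-\frac{b}{a}-\frac{c^2}{ab}-\frac{a}{b}$$ Poisson commute with $e$ and satisfy the cubic relation (the $PV$ monodromy cubic with $G_3=e$, $G_\infty=d$) $$x_1x_2x_3+x_1^2+x_2^2-(G_1G_\infty+G_2G_3)x_1-(G_2G_\infty+G_1G_3)x_2-G_3G_\infty x_3+G_\infty^2+G_3^2+G_1G_2G_3G_\infty=0.$$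
   Context: A log-canonical bracket is extended from the generators to all Laurent polynomials by bilinearity, antisymmetry and the Leibniz rule. Geometrically, $a,b,c,d,e$ are $\lambda$-lengths of a complete system of arcs on a Riemann sphere with three holes and two bordered cusps on one of the holes, and $G_1,G_2$ encode the perimeters of the two holes without cusps; this interpretation is not needed for the claim. *)

theory Defs
  imports "HOL-Analysis.Analysis"
begin

datatype var = va | vb | vc | vd | ve | vG1 | vG2

lemma UNIV_var: "(UNIV :: var set) = {va, vb, vc, vd, ve, vG1, vG2}"
  by (auto intro: var.exhaust)

instance var :: finite
  by standard (simp add: UNIV_var)

text \<open>Structure constants of the log-canonical bracket: {x_i,x_j} = om i j * x_i * x_j.\<close>
fun om :: "var \<Rightarrow> var \<Rightarrow> real" where
  "om va vb = 1" | "om vb va = -1"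
| "om va vd = -1/2" | "om vd va = 1/2"
| "om va ve = 1/2" | "om ve va = -1/2"
| "om vb vd = -1/2" | "om vd vb = 1/2"
| "om vb ve = 1/2" | "om ve vb = -1/2"
| "om vc vd = -1/2" | "om vd vc = 1/2"
| "om vc ve = 1/2" | "om ve vc = -1/2"
| "om _ _ = 0"

definition torus :: "(real^var) set" where
  "torus = {p. p$va \<noteq> 0 \<and> p$vb \<noteq> 0 \<and> p$vc \<noteq> 0 \<and> p$vd \<noteq> 0 \<and> p$ve \<noteq> 0}"

definition poisson_matrix :: "real^var \<Rightarrow> real^var^var" where
  "poisson_matrix p = (\<chi> i j. om i j * p$i * p$j)"

definition pd :: "var \<Rightarrow> (real^var \<Rightarrow> real) \<Rightarrow> real^var \<Rightarrow> real" where
  "pd i f p = deriv (\<lambda>t. f (p + t *\<^sub>R axis i 1)) 0"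

text \<open>The bracket, extended from generators by bilinearity, antisymmetry and Leibniz.\<close>
definition pbracket :: "(real^var \<Rightarrow> real) \<Rightarrow> (real^var \<Rightarrow> real) \<Rightarrow> real^var \<Rightarrow> real" where
  "pbracket f g p = (\<Sum>i\<in>UNIV. \<Sum>j\<in>UNIV. poisson_matrix p $ i $ j * pd i f p * pd j g p)"

definition casimir :: "(real^var \<Rightarrow> real) \<Rightarrow> bool" where
  "casimir F \<longleftrightarrow> (\<forall>g. (\<forall>p\<in>torus. g differentiable (at p)) \<longrightarrow> (\<forall>p\<in>torus. pbracket F g p = 0))"

definition x1 :: "real^var \<Rightarrow> real" where
  "x1 p = (let a = p$va; b = p$vb; c = p$vc; d = p$vd; e = p$ve in
     - e * a / c - d * b / c)"

definition x2 :: "real^var \<Rightarrow> real" where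
  "x2 p = (let a = p$va; b = p$vb; c = p$vc; d = p$vd; e = p$ve; G1 = p$vG1 in
     - e * b / c - G1 * d * b / a - d * b^2 / (a * c) - d * c / a)"

definition x3 :: "real^var \<Rightarrow> real" where
  "x3 p = (let a = p$va; b = p$vb; c = p$vc; G1 = p$vG1; G2 = p$vG2 in
     - G2 * c / b - G1 * c / a - b / a - c^2 / (a * b) - a / b)"

end

theory Submission
  imports Defs
begin

text \<open>
G1 and G2 have zero rows in the Poisson matrix, and the rows of d and e are proportional
with opposite signs, which makes de a Casimir. At every point of the torus the rows of
a, b, c, d are independent while the remaining rows lie in their span, so the rank is
4 throughout. The bracket with e is e/2 times the Euler derivation
a d/da + b d/db + c d/dc, and x1, x2, x3 are homogeneous of degree 0 in (a, b, c), so
they commute with e. The cubic relation is an identity of rational functions.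
\<close>

lemma pd_eqI:
  "((\<lambda>t. f (p + t *\<^sub>R axis i 1)) has_real_derivative D) (at 0) \<Longrightarrow> pd i f p = D"
  unfolding pd_def by (rule DERIV_imp_deriv)

lemma line_has_real_derivative:
  assumes "(f has_derivative f') (at p)"
  shows "((\<lambda>t. f (p + t *\<^sub>R v)) has_real_derivative f' v) (at 0)"
proof -
  have "((\<lambda>t. p + t *\<^sub>R v) has_derivative (\<lambda>t. t *\<^sub>R v)) (at 0)"
    by (auto intro!: derivative_eq_intros)
  from has_derivative_compose[OF this] assms
  have "((\<lambda>t. f (p + t *\<^sub>R v)) has_derivative (\<lambda>t. f' (t *\<^sub>R v))) (at 0)" by simp
  then show ?thesis
    by (rule has_derivative_imp_has_field_derivative)
       (simp add: linear_scale[OF has_derivative_linear[OF assms]])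
qed

lemma pd_has_derivative:
  assumes "(f has_derivative f') (at p)"
  shows "pd i f p = f' (axis i 1)"
  by (rule pd_eqI) (rule line_has_real_derivative[OF assms])

lemma has_derivative_eq_sum_pd:
  assumes "(f has_derivative f') (at p)"
  shows "f' v = (\<Sum>i\<in>UNIV. v$i * pd i f p)"
proof -
  have "f' v = f' (\<Sum>i\<in>UNIV. v$i *\<^sub>R axis i 1)"
    using basis_expansion[of v] by (simp add: scalar_mult_eq_scaleR)
  also have "\<dots> = (\<Sum>i\<in>UNIV. v$i * f' (axis i 1))"
    using has_derivative_linear[OF assms] by (simp add: linear_sum linear_scale)
  finally show ?thesis by (simp add: pd_has_derivative[OF assms])
qed

lemma sum_pd_eq_0_if_constant_on_line:
  assumes "f differentiable (at p)" and "open T" "0 \<in> T"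
    and "\<And>t. t \<in> T \<Longrightarrow> f (p + t *\<^sub>R v) = f p"
  shows "(\<Sum>i\<in>UNIV. v$i * pd i f p) = 0"
proof -
  obtain f' where f': "(f has_derivative f') (at p)"
    using assms(1) by (auto simp: differentiable_def)
  have "((\<lambda>t. f (p + t *\<^sub>R v)) has_real_derivative 0) (at 0)"
    by (rule has_field_derivative_transform_within_open[OF DERIV_const assms(2,3)])
       (simp add: assms(4))
  with line_has_real_derivative[OF f'] have "f' v = 0" by (rule DERIV_unique)
  then show ?thesis by (simp add: has_derivative_eq_sum_pd[OF f'])
qed

lemma coordinate_differentiable [derivative_intros]: "(\<lambda>x. x$i) differentiable (at p)"
  by (simp add: bounded_linear_imp_differentiable bounded_linear_vec_nth)

lemma pd_coordinate: "pd i (\<lambda>q. q$k) p = (if k = i then 1 else 0)"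
  by (rule pd_eqI) (auto intro!: derivative_eq_intros simp: axis_def)

lemma pd_vd_mult_ve:
  "pd i (\<lambda>q. q$vd * q$ve) p = (if i = vd then p$ve else 0) + (if i = ve then p$vd else 0)"
  by (rule pd_eqI) (auto intro!: derivative_eq_intros simp: axis_def)

lemma sum_UNIV_var: "(\<Sum>i\<in>UNIV. f i) = f va + f vb + f vc + f vd + f ve + f vG1 + f vG2"
  by (simp add: UNIV_var add.assoc)

lemma om_antisym: "om j i = - om i j"
  by (cases i; cases j) simp_all

lemma pbracket_antisym: "pbracket g f p = - pbracket f g p"
proof -
  have "om j i * p$j * p$i * pd j g p * pd i f p = - (om i j * p$i * p$j * pd i f p * pd j g p)"
    for i j by (subst om_antisym) simp
  then show ?thesis
    unfolding pbracket_def poisson_matrix_def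
    by (subst sum.swap) (simp add: sum_negf)
qed

lemma pbracket_coordinate_right:
  "pbracket f (\<lambda>q. q$k) p = (\<Sum>i\<in>UNIV. om i k * p$i * p$k * pd i f p)"
  unfolding pbracket_def poisson_matrix_def
  by (simp add: pd_coordinate if_distrib[of "\<lambda>x. _ * x"] sum.delta cong: if_cong)

lemma casimir_vG1: "casimir (\<lambda>p. p$vG1)"
  by (simp add: casimir_def pbracket_antisym[of "\<lambda>p. p$_"] pbracket_coordinate_right sum_UNIV_var)

lemma casimir_vG2: "casimir (\<lambda>p. p$vG2)"
  by (simp add: casimir_def pbracket_antisym[of "\<lambda>p. p$_"] pbracket_coordinate_right sum_UNIV_var)

lemma casimir_vd_mult_ve: "casimir (\<lambda>p. p$vd * p$ve)"
  unfolding casimir_def pbracket_def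
  by (simp add: pd_vd_mult_ve sum_UNIV_var poisson_matrix_def algebra_simps)

definition abc_part :: "real^var \<Rightarrow> real^var" where
  "abc_part p = (\<chi> i. if i \<in> {va, vb, vc} then p$i else 0)"

definition scale_abc :: "real \<Rightarrow> real^var \<Rightarrow> real^var" where
  "scale_abc s p = (\<chi> i. if i \<in> {va, vb, vc} then s * p$i else p$i)"

lemma pbracket_ve_eq_euler:
  "pbracket f (\<lambda>q. q$ve) p = p$ve / 2 * (\<Sum>i\<in>UNIV. abc_part p $ i * pd i f p)"
  by (simp add: pbracket_coordinate_right sum_UNIV_var abc_part_def algebra_simps)

lemma pbracket_ve_eq_0_if_homogeneous:
  assumes "f differentiable (at p)" and "\<And>s. s > 0 \<Longrightarrow> f (scale_abc s p) = f p"
  shows "pbracket f (\<lambda>q. q$ve) p = 0"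
proof -
  have "p + t *\<^sub>R abc_part p = scale_abc (1 + t) p" for t
    by (simp add: vec_eq_iff abc_part_def scale_abc_def algebra_simps)
  then have "(\<Sum>i\<in>UNIV. abc_part p $ i * pd i f p) = 0"
    using assms by (intro sum_pd_eq_0_if_constant_on_line[where T = "{-1<..}"]) auto
  then show ?thesis by (simp add: pbracket_ve_eq_euler)
qed

lemma x1_differentiable: "p \<in> torus \<Longrightarrow> x1 differentiable (at p)"
  unfolding x1_def Let_def torus_def by (auto intro!: derivative_intros)

lemma x2_differentiable: "p \<in> torus \<Longrightarrow> x2 differentiable (at p)"
  unfolding x2_def Let_def torus_def by (auto intro!: derivative_intros)

lemma x3_differentiable: "p \<in> torus \<Longrightarrow> x3 differentiable (at p)"
  unfolding x3_def Let_def torus_def by (auto intro!: derivative_intros)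

lemma x1_scale_abc: "s \<noteq> 0 \<Longrightarrow> x1 (scale_abc s p) = x1 p"
  by (simp add: x1_def scale_abc_def Let_def)

lemma x2_scale_abc: "s \<noteq> 0 \<Longrightarrow> x2 (scale_abc s p) = x2 p"
  by (simp add: x2_def scale_abc_def Let_def power2_eq_square)

lemma x3_scale_abc: "s \<noteq> 0 \<Longrightarrow> x3 (scale_abc s p) = x3 p"
  by (simp add: x3_def scale_abc_def Let_def power2_eq_square)

lemma pbracket_x1_ve: "p \<in> torus \<Longrightarrow> pbracket x1 (\<lambda>q. q$ve) p = 0"
  by (rule pbracket_ve_eq_0_if_homogeneous[OF x1_differentiable]) (simp_all add: x1_scale_abc)

lemma pbracket_x2_ve: "p \<in> torus \<Longrightarrow> pbracket x2 (\<lambda>q. q$ve) p = 0"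
  by (rule pbracket_ve_eq_0_if_homogeneous[OF x2_differentiable]) (simp_all add: x2_scale_abc)

lemma pbracket_x3_ve: "p \<in> torus \<Longrightarrow> pbracket x3 (\<lambda>q. q$ve) p = 0"
  by (rule pbracket_ve_eq_0_if_homogeneous[OF x3_differentiable]) (simp_all add: x3_scale_abc)

lemma all_var: "(\<forall>j. P j) \<longleftrightarrow> P va \<and> P vb \<and> P vc \<and> P vd \<and> P ve \<and> P vG1 \<and> P vG2"
  by (metis var.exhaust)

lemma row_poisson_matrix: "row i (poisson_matrix p) $ j = om i j * p$i * p$j"
  by (simp add: row_def poisson_matrix_def)

lemma not_in_span_if_coordinate:
  fixes u :: "real^'n"
  assumes "u$j \<noteq> 0" and "\<forall>v\<in>S. v$j = 0"
  shows "u \<notin> span S"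
proof
  assume "u \<in> span S"
  moreover have "span S \<subseteq> {v. v$j = 0}"
    using assms(2) by (intro span_minimal) (auto simp: subspace_def)
  ultimately show False using assms(1) by auto
qed

lemma rank_poisson_matrix_le:
  assumes "p \<in> torus"
  shows "rank (poisson_matrix p) \<le> 4"
proof -
  let ?r = "\<lambda>i. row i (poisson_matrix p)"
  have "?r vG1 = 0" "?r vG2 = 0"
    by (simp_all add: vec_eq_iff all_var row_poisson_matrix)
  moreover have "?r ve = (- (p$ve / p$vd)) *\<^sub>R ?r vd"
    using assms by (simp add: vec_eq_iff all_var row_poisson_matrix torus_def field_simps)
  ultimately have "?r i \<in> span {?r va, ?r vb, ?r vc, ?r vd}" for i
    by (cases i) (auto intro: span_base span_zero span_mul span_neg)
  then have "rows (poisson_matrix p) \<subseteq> span {?r va, ?r vb, ?r vc, ?r vd}"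
    by (auto simp: rows_def)
  then have "rank (poisson_matrix p) \<le> card {?r va, ?r vb, ?r vc, ?r vd}"
    unfolding row_rank_def by (rule dim_le_card) simp
  also have "\<dots> \<le> 4" by (simp add: card_insert_if)
  finally show ?thesis .
qed

lemma rank_poisson_matrix_ge:
  assumes "p \<in> torus"
  shows "rank (poisson_matrix p) \<ge> 4"
proof -
  let ?r = "\<lambda>i. row i (poisson_matrix p)"
  have nz: "p$va \<noteq> 0" "p$vb \<noteq> 0" "p$vc \<noteq> 0" "p$vd \<noteq> 0"
    using assms by (auto simp: torus_def)
  have d: "?r vd \<notin> span {?r vb, ?r va, ?r vc}"
    using nz by (intro not_in_span_if_coordinate[where j = vc]) (simp_all add: row_poisson_matrix)
  have b: "?r vb \<notin> span {?r va, ?r vc}"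
    using nz by (intro not_in_span_if_coordinate[where j = va]) (simp_all add: row_poisson_matrix)
  have a: "?r va \<notin> span {?r vc}"
    using nz by (intro not_in_span_if_coordinate[where j = vb]) (simp_all add: row_poisson_matrix)
  have c: "?r vc \<notin> span {}"
    using nz by (intro not_in_span_if_coordinate[where j = vd]) (simp_all add: row_poisson_matrix)
  have independent: "independent {?r vd, ?r vb, ?r va, ?r vc}"
    using independent_insertI[OF d independent_insertI[OF b independent_insertI[OF a
          independent_insertI[OF c independent_empty]]]] .
  have card: "card {?r vd, ?r vb, ?r va, ?r vc} = 4"
  proof -
    have "?r vd \<notin> {?r vb, ?r va, ?r vc}"
      using d span_superset[of "{?r vb, ?r va, ?r vc}"] by blast
    moreover have "?r vb \<notin> {?r va, ?r vc}"
      using b span_superset[of "{?r va, ?r vc}"] by blast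
    moreover have "?r va \<noteq> ?r vc"
      using a span_superset[of "{?r vc}"] by blast
    ultimately show ?thesis by simp
  qed
  have "{?r vd, ?r vb, ?r va, ?r vc} \<subseteq> rows (poisson_matrix p)"
    by (auto simp: rows_def)
  from independent_card_le_dim[OF this independent] show ?thesis
    by (simp add: card row_rank_def)
qed

lemma open_torus: "open torus"
  unfolding torus_def by (intro open_Collect_conj open_Collect_neq continuous_intros)

lemma pv_monodromy_cubic:
  fixes a b c d e G1 G2 :: real
  assumes "a \<noteq> 0" "b \<noteq> 0" "c \<noteq> 0"
  defines "y1 \<equiv> - e * a / c - d * b / c"
    and "y2 \<equiv> - e * b / c - G1 * d * b / a - d * b^2 / (a * c) - d * c / a"
    and "y3 \<equiv> - G2 * c / b - G1 * c / a - b / a - c^2 / (a * b) - a / b"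
  shows "y1 * y2 * y3 + y1^2 + y2^2 - (G1 * d + G2 * e) * y1 - (G2 * d + G1 * e) * y2
    - e * d * y3 + d^2 + e^2 + G1 * G2 * e * d = 0"
  using assms unfolding y1_def y2_def y3_def
  by (simp add: field_simps power2_eq_square)

lemma x1_x2_x3_monodromy_cubic:
  assumes "p \<in> torus"
  shows "(let G1 = p$vG1; G2 = p$vG2; G3 = p$ve; Ginf = p$vd in
          x1 p * x2 p * x3 p + (x1 p)^2 + (x2 p)^2
          - (G1 * Ginf + G2 * G3) * x1 p - (G2 * Ginf + G1 * G3) * x2 p
          - G3 * Ginf * x3 p + Ginf^2 + G3^2 + G1 * G2 * G3 * Ginf = 0)"
  using assms pv_monodromy_cubic[of "p$va" "p$vb" "p$vc"]
  by (simp add: torus_def x1_def x2_def x3_def Let_def)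

theorem mainTheorem2:
  shows "casimir (\<lambda>p. p$vG1) \<and> casimir (\<lambda>p. p$vG2) \<and> casimir (\<lambda>p. p$vd * p$ve)
    \<and> (\<forall>p\<in>torus. rank (poisson_matrix p) \<le> 4)
    \<and> (\<exists>U. open U \<and> U \<subseteq> torus \<and> torus \<subseteq> closure U \<and> (\<forall>p\<in>U. rank (poisson_matrix p) = 4))
    \<and> (\<forall>p\<in>torus. pbracket x1 (\<lambda>q. q$ve) p = 0)
    \<and> (\<forall>p\<in>torus. pbracket x2 (\<lambda>q. q$ve) p = 0)
    \<and> (\<forall>p\<in>torus. pbracket x3 (\<lambda>q. q$ve) p = 0)
    \<and> (\<forall>p\<in>torus.
         (let G1 = p$vG1; G2 = p$vG2; G3 = p$ve; Ginf = p$vd in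
          x1 p * x2 p * x3 p + (x1 p)^2 + (x2 p)^2
          - (G1 * Ginf + G2 * G3) * x1 p - (G2 * Ginf + G1 * G3) * x2 p
          - G3 * Ginf * x3 p + Ginf^2 + G3^2 + G1 * G2 * G3 * Ginf = 0))"
proof -
  have "\<forall>p\<in>torus. rank (poisson_matrix p) = 4"
    using rank_poisson_matrix_le rank_poisson_matrix_ge by (blast intro: antisym)
  then have "\<exists>U. open U \<and> U \<subseteq> torus \<and> torus \<subseteq> closure U \<and> (\<forall>p\<in>U. rank (poisson_matrix p) = 4)"
    using open_torus closure_subset by blast
  then show ?thesis
    using casimir_vG1 casimir_vG2 casimir_vd_mult_ve rank_poisson_matrix_le
      pbracket_x1_ve pbracket_x2_ve pbracket_x3_ve x1_x2_x3_monodromy_cubic by blast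
qed

end
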